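(* Let $P\subset\mathbf H^2$ be a convex polygon and let $\tau:S\to S$ be the homeomorphism of the circle at infinity $S$ induced by the outer billiard map about $P$. Then $\tau$ is not periodic, i.e. there is no $N\ge1$ with $\tau^N=\mathrm{id}_S$.
   Context: Outer billiard in $\mathbf H^2$: $X=\mathbf H^2\setminus P$ is partitioned by the geodesic rays extending the sides of $P$ (the ray extending side $ab$ beyond $a$, vertices counterclockwise) into regions $X_a$ indexed by vertices ($X_a$ = points $x$ for which the geodesic through $x$ and $a$ supports $P$ with $P$ on a fixed side), and the map $T$ is the geodesic symmetry about $a$ on $X_a$. This map extends continuously to a homeomorphism $\tau$ of the circle at infinity. *)

theory Defs
  imports "HOL-Analysis.Analysis"
begin

text \<open>Model: the Beltrami--Klein model of the hyperbolic plane, i.e. the open unit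
disc in the complex plane.  Geodesics are (open) Euclidean chords, so hyperbolic
convexity coincides with Euclidean convexity and the circle at infinity is the unit
circle.\<close>

definition hyp_plane :: "complex set" where
  "hyp_plane = ball 0 1"

definition circle_at_infinity :: "complex set" where
  "circle_at_infinity = sphere 0 1"

text \<open>A (nondegenerate) convex polygon of the hyperbolic plane, given by its finite
set of vertices V (the extreme points of its convex hull).\<close>

definition hyp_convex_polygon :: "complex set \<Rightarrow> bool" where
  "hyp_convex_polygon V \<longleftrightarrow> finite V \<and> V \<subseteq> hyp_plane \<and>
     interior (convex hull V) \<noteq> {} \<and> (\<forall>v\<in>V. v extreme_point_of (convex hull V))"

text \<open>Geodesic (point) symmetry about a point a of the Klein model.  It is the
projective map induced by the Lorentz reflection X \<mapsto> -X - 2<X,A>A of the hyperboloid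
model; its denominator is positive on the closed disc.\<close>

definition geod_symm :: "complex \<Rightarrow> complex \<Rightarrow> complex" where
  "geod_symm a x =
     (of_real (2 * (1 - x \<bullet> a)) * a - of_real (1 - (cmod a)\<^sup>2) * x)
       / of_real (2 * (1 - x \<bullet> a) - (1 - (cmod a)\<^sup>2))"

text \<open>Orientation: cross u v > 0 iff v is to the left of u.\<close>

definition cross :: "complex \<Rightarrow> complex \<Rightarrow> real" where
  "cross u v = Im (cnj u * v)"

text \<open>The region X_a: points x of X = H^2 \ P such that the geodesic through x and the
vertex a supports P, with P lying (weakly) on the left of the oriented geodesic
from x to a.  On X_a the outer billiard map is T x = geod_symm a x.\<close>

definition billiard_region :: "complex set \<Rightarrow> complex \<Rightarrow> complex set" where
  "billiard_region V a =
     {x \<in> hyp_plane - convex hull V. a \<in> V \<and> (\<forall>p\<in>convex hull V. cross (a - x) (p - x) \<ge> 0)}"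

text \<open>tau : S \<rightarrow> S is the continuous extension of the outer billiard map T to the
circle at infinity: T x tends to tau xi as x \<in> X tends to xi.\<close>

definition boundary_extension :: "complex set \<Rightarrow> (complex \<Rightarrow> complex) \<Rightarrow> bool" where
  "boundary_extension V \<tau> \<longleftrightarrow>
     \<tau> ` circle_at_infinity \<subseteq> circle_at_infinity \<and>
     (\<forall>\<xi>\<in>circle_at_infinity. \<forall>\<epsilon>>0. \<exists>\<delta>>0. \<forall>a x.
        x \<in> billiard_region V a \<and> dist x \<xi> < \<delta> \<longrightarrow> dist (geod_symm a x) (\<tau> \<xi>) < \<epsilon>)"

end

theory Submission
  imports Defs
begin

text \<open>On the circle at infinity the outer billiard map is piecewise M\<ouml>bius:
  \<open>\<tau> z\<close> is the image of \<open>z\<close> under the symmetry about any vertex \<open>a\<close> for which the line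
  from \<open>z\<close> through \<open>a\<close> supports \<open>P\<close>.  Suppose \<open>\<tau>\<^sup>N = id\<close>, and let \<open>c\<close> be a point of
  the circle on the line of an edge \<open>ab\<close>, so that both \<open>a\<close> and \<open>b\<close> support \<open>P\<close> from
  \<open>c\<close>.  Approaching \<open>c\<close> from either side, the vertex itineraries of length \<open>N\<close>
  stabilise along a subsequence to words \<open>W\<^sub>1\<close>, \<open>W\<^sub>2\<close> whose M\<ouml>bius maps fix infinitely
  many points, hence are the identity and have derivative of modulus 1 at \<open>c\<close>.  But
  in the limit every letter of \<open>W\<^sub>1\<close> is a support vertex of largest dilation and every
  letter of \<open>W\<^sub>2\<close> one of smallest, and at the first step the nearer vertex \<open>a\<close> dilates
  strictly more than \<open>b\<close>; so the dilation of \<open>W\<^sub>1\<close> at \<open>c\<close> exceeds that of \<open>W\<^sub>2\<close>.\<close>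

section \<open>Boundary values of the geodesic symmetries\<close>

text \<open>On the unit circle \<^term>\<open>geod_symm a\<close> coincides with this M\<ouml>bius involution of the
  disc; it sends \<^term>\<open>z\<close> to the other endpoint of the chord through \<^term>\<open>z\<close> and
  \<^term>\<open>a\<close>.\<close>

definition circle_symm :: "complex \<Rightarrow> complex \<Rightarrow> complex" where
  "circle_symm a z = (a - z) / (1 - cnj a * z)"

lemma mult_cnj_eq_1: "cmod z = 1 \<Longrightarrow> z * cnj z = 1"
  using complex_norm_square[of z] by simp

lemma circle_symm_denom_nonzero:
  assumes "cmod z = 1" "cmod a < 1"
  shows "1 - cnj a * z \<noteq> 0"
proof
  assume "1 - cnj a * z = 0"
  hence "cmod (cnj a * z) = 1" by simp
  thus False using assms by (simp add: norm_mult)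
qed

lemma geod_symm_denom_pos:
  assumes "cmod z \<le> 1" "cmod a < 1"
  shows "2 * (1 - z \<bullet> a) - (1 - (cmod a)\<^sup>2) > 0"
proof -
  have "z \<bullet> a \<le> cmod a"
    using norm_cauchy_schwarz[of z a] assms mult_left_le_one_le[of "cmod a" "cmod z"] by simp
  hence "2 * (1 - z \<bullet> a) - (1 - (cmod a)\<^sup>2) \<ge> (1 - cmod a)\<^sup>2"
    by (simp add: power2_eq_square algebra_simps)
  moreover have "(1 - cmod a)\<^sup>2 > 0" using assms(2) by simp
  ultimately show ?thesis by linarith
qed

lemma isCont_geod_symm:
  assumes "cmod z \<le> 1" "cmod a < 1"
  shows "isCont (geod_symm a) z"
proof -
  have "complex_of_real (2 * (1 - z \<bullet> a) - (1 - (cmod a)\<^sup>2)) \<noteq> 0"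
    using geod_symm_denom_pos[OF assms] by (metis of_real_eq_0_iff order_less_irrefl)
  thus ?thesis unfolding geod_symm_def by (intro continuous_intros) auto
qed

lemma geod_symm_eq_circle_symm:
  assumes z: "cmod z = 1" and a: "cmod a < 1"
  shows "geod_symm a z = circle_symm a z"
proof -
  have z0: "z \<noteq> 0" using z by auto
  have cz: "cnj z = 1 / z" using mult_cnj_eq_1[OF z] z0 by (simp add: field_simps)
  have inner: "complex_of_real (z \<bullet> a) = (cnj z * a + z * cnj a) / 2"
    by (simp add: inner_complex_def complex_eq_iff)
  have "complex_of_real (2 * (1 - z \<bullet> a) - (1 - (cmod a)\<^sup>2)) \<noteq> 0"
    using geod_symm_denom_pos[of z a] z a by (metis of_real_eq_0_iff order_less_irrefl order_refl)
  moreover have "(of_real (2 * (1 - z \<bullet> a)) * a - of_real (1 - (cmod a)\<^sup>2) * z) * (1 - cnj a * z)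
      = of_real (2 * (1 - z \<bullet> a) - (1 - (cmod a)\<^sup>2)) * (a - z)"
    unfolding of_real_diff of_real_mult inner complex_norm_square of_real_1 of_real_numeral cz
    using z0 by (simp add: field_simps)
  ultimately show ?thesis
    using circle_symm_denom_nonzero[OF z a] unfolding geod_symm_def circle_symm_def
    by (simp add: field_simps)
qed

lemma norm_one_minus_cnj_mult:
  assumes "cmod z = 1"
  shows "cmod (1 - cnj a * z) = cmod (z - a)"
proof -
  have "1 - cnj a * z = z * cnj (z - a)" using mult_cnj_eq_1[OF assms] by (simp add: algebra_simps)
  thus ?thesis using assms by (metis complex_mod_cnj mult_1 norm_mult)
qed

lemma norm_circle_symm:
  assumes "cmod z = 1" "cmod a < 1"
  shows "cmod (circle_symm a z) = 1"
proof -
  have "cmod (a - z) = cmod (1 - cnj a * z)"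
    using norm_one_minus_cnj_mult[OF assms(1)] by (simp add: norm_minus_commute)
  thus ?thesis using circle_symm_denom_nonzero[OF assms] by (simp add: circle_symm_def norm_divide)
qed

lemma isCont_circle_symm:
  assumes "cmod z = 1" "cmod a < 1"
  shows "isCont (circle_symm a) z"
  using circle_symm_denom_nonzero[OF assms] unfolding circle_symm_def
  by (intro continuous_intros) auto

lemma circle_symm_diff:
  assumes "1 - cnj a * z \<noteq> 0" "1 - cnj a * w \<noteq> 0"
  shows "circle_symm a z - circle_symm a w
    = - of_real (1 - (cmod a)\<^sup>2) * (z - w) / ((1 - cnj a * z) * (1 - cnj a * w))"
  using assms unfolding circle_symm_def of_real_diff complex_norm_square of_real_1
  by (simp add: field_simps)

lemma circle_symm_minus_center:
  assumes z: "cmod z = 1" and a: "cmod a < 1"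
  shows "circle_symm a z - a = - of_real ((1 - (cmod a)\<^sup>2) / (cmod (z - a))\<^sup>2) * (z - a)"
proof -
  have z0: "z \<noteq> 0" and za: "z \<noteq> a" using z a by auto
  have cz: "cnj z = 1 / z" using mult_cnj_eq_1[OF z] z0 by (simp add: field_simps)
  have "of_real ((cmod (z - a))\<^sup>2) = (z - a) * (1 - cnj a * z) / z"
    unfolding complex_norm_square complex_cnj_diff cz using z0 by (simp add: field_simps)
  hence q: "z / (1 - cnj a * z) = (z - a) / of_real ((cmod (z - a))\<^sup>2)"
    using circle_symm_denom_nonzero[OF z a] z0 za by simp
  have "circle_symm a z - a = - of_real (1 - (cmod a)\<^sup>2) * (z / (1 - cnj a * z))"
    using circle_symm_denom_nonzero[OF z a]
    unfolding circle_symm_def of_real_diff complex_norm_square of_real_1 by (simp add: field_simps)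
  also have "\<dots> = - of_real ((1 - (cmod a)\<^sup>2) / (cmod (z - a))\<^sup>2) * (z - a)"
    unfolding q of_real_divide by (simp add: divide_inverse algebra_simps)
  finally show ?thesis .
qed

lemma circle_symm_chord:
  assumes c: "cmod c = 1" and w: "cmod w < 1"
  shows "circle_symm w c = c - of_real (2 * Re (cnj c * (w - c)) / (cmod (w - c))\<^sup>2) * (w - c)"
proof -
  define d where "d = w - c"
  have d0: "d \<noteq> 0" and c0: "c \<noteq> 0" using c w by (auto simp: d_def)
  have cc: "c * cnj c = 1" using mult_cnj_eq_1[OF c] .
  hence "1 - cnj w * c = - c * cnj d" by (simp add: d_def algebra_simps)
  hence "circle_symm w c = d / (- c * cnj d)" by (simp add: circle_symm_def d_def)
  also have "\<dots> = - cnj c * d / cnj d" using cc d0 c0 by (simp add: field_simps)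
  also have "\<dots> = c - of_real (2 * Re (cnj c * d) / (cmod d)\<^sup>2) * d"
  proof -
    have "complex_of_real (2 * Re (cnj c * d)) = cnj c * d + c * cnj d"
      by (simp add: complex_eq_iff algebra_simps)
    thus ?thesis using cc d0 unfolding of_real_divide complex_norm_square by (simp add: field_simps)
  qed
  finally show ?thesis by (simp add: d_def)
qed

lemma cross_Re_Im: "cross u v = Re u * Im v - Im u * Re v"
  by (simp add: cross_def)

lemma chord_points_inward:
  assumes "cmod w \<le> cmod c" "w \<noteq> c"
  shows "Re (cnj c * (w - c)) < 0"
proof -
  have "2 * Re (cnj c * (w - c)) = (cmod w)\<^sup>2 - (cmod c)\<^sup>2 - (cmod (w - c))\<^sup>2"
    by (simp only: cmod_power2) (simp add: power2_eq_square algebra_simps)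
  moreover have "(cmod w)\<^sup>2 \<le> (cmod c)\<^sup>2" using assms(1) by (simp add: power_mono)
  moreover have "(cmod (w - c))\<^sup>2 > 0" using assms(2) by simp
  ultimately show ?thesis by linarith
qed

lemma circle_symm_eq_if_collinear:
  assumes c: "cmod c = 1" and w: "cmod w < 1" and v: "cmod v < 1"
    and t: "v - c = of_real t * (w - c)" "t \<noteq> 0"
  shows "circle_symm v c = circle_symm w c"
proof -
  have "Re (cnj c * (v - c)) = t * Re (cnj c * (w - c))" by (simp add: t(1) algebra_simps)
  moreover have "cmod (v - c) = \<bar>t\<bar> * cmod (w - c)" by (simp add: t(1) norm_mult)
  ultimately
  have "2 * Re (cnj c * (v - c)) / (cmod (v - c))\<^sup>2 * t = 2 * Re (cnj c * (w - c)) / (cmod (w - c))\<^sup>2"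
    using t(2) by (simp add: power_mult_distrib divide_simps) (simp add: power2_eq_square)
  hence "of_real (2 * Re (cnj c * (v - c)) / (cmod (v - c))\<^sup>2) * (v - c)
      = of_real (2 * Re (cnj c * (w - c)) / (cmod (w - c))\<^sup>2) * (w - c)"
    unfolding t(1) by (metis mult.assoc of_real_mult)
  thus ?thesis using circle_symm_chord[OF c w] circle_symm_chord[OF c v] by simp
qed

lemma circle_symm_neq:
  assumes c: "cmod c = 1" and w: "cmod w < 1"
  shows "circle_symm w c \<noteq> c"
proof -
  have "cmod w \<le> cmod c" "w \<noteq> c" using c w by auto
  moreover have "Re (cnj c * (w - c)) < 0" using chord_points_inward calculation by blast
  ultimately have "of_real (2 * Re (cnj c * (w - c)) / (cmod (w - c))\<^sup>2) * (w - c) \<noteq> 0"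
    by (simp only: mult_eq_0_iff of_real_eq_0_iff divide_eq_0_iff right_minus_eq) auto
  thus ?thesis using circle_symm_chord[OF c w] by simp
qed

text \<open>\<^term>\<open>circle_symm w\<close> preserves the orientation of the circle.\<close>

lemma cross_circle_symm:
  assumes z: "cmod z = 1" and c: "cmod c = 1" and w: "cmod w < 1"
  shows "\<exists>k>0. cross (c - circle_symm w c) (circle_symm w z - circle_symm w c)
                = k * cross (w - c) (z - c)"
proof -
  define lz where "lz = (1 - (cmod w)\<^sup>2) / (cmod (z - w))\<^sup>2"
  define lc where "lc = (1 - (cmod w)\<^sup>2) / (cmod (c - w))\<^sup>2"
  have "(cmod w)\<^sup>2 < 1" using w by (simp add: abs_square_less_1)
  moreover have "z \<noteq> w" "c \<noteq> w" using z c w by auto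
  ultimately have "lz > 0" "lc > 0" by (auto simp: lz_def lc_def)
  moreover have "circle_symm w z = w - of_real lz * (z - w)" "circle_symm w c = w - of_real lc * (c - w)"
    using circle_symm_minus_center[OF z w] circle_symm_minus_center[OF c w]
    by (simp_all add: lz_def lc_def algebra_simps)
  hence "cross (c - circle_symm w c) (circle_symm w z - circle_symm w c)
      = ((1 + lc) * lz) * cross (w - c) (z - c)"
    by (simp only:) (simp add: cross_Re_Im algebra_simps)
  ultimately show ?thesis by (intro exI[of _ "(1 + lc) * lz"]) auto
qed

section \<open>Support vertices\<close>

definition support_vertex :: "complex set \<Rightarrow> complex \<Rightarrow> complex \<Rightarrow> bool" where
  "support_vertex V a z \<longleftrightarrow> a \<in> V \<and> (\<forall>p\<in>V. cross (a - z) (p - z) \<ge> 0)"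

lemma cross_eq_inner: "cross u v = (\<i> * u) \<bullet> v"
  by (simp add: cross_def inner_complex_def)

lemma cross_nonneg_convex_hull:
  assumes "\<forall>p\<in>V. cross u (p - z) \<ge> 0" "p \<in> convex hull V"
  shows "cross u (p - z) \<ge> 0"
proof -
  have "convex hull V \<subseteq> {p. (\<i> * u) \<bullet> p \<ge> (\<i> * u) \<bullet> z}"
    using assms(1) by (intro hull_minimal convex_halfspace_ge) (auto simp: cross_eq_inner inner_diff_right)
  thus ?thesis using assms(2) by (auto simp: cross_eq_inner inner_diff_right)
qed

lemma cross_nonneg_trans:
  assumes "cross u v \<ge> 0" "cross v w \<ge> 0"
    and "Re (cnj e * u) > 0" "Re (cnj e * v) > 0" "Re (cnj e * w) > 0"
  shows "cross u w \<ge> 0"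
proof -
  have "cross u w * Re (cnj e * v) = cross u v * Re (cnj e * w) + cross v w * Re (cnj e * u)"
    by (simp add: cross_Re_Im algebra_simps)
  also have "\<dots> \<ge> 0" using assms by simp
  finally show ?thesis using assms(4) by (simp add: zero_le_mult_iff)
qed

text \<open>Within an open half-plane the relation \<^term>\<open>cross m x \<ge> 0\<close> is a total preorder,
  so a finite set has a least element.\<close>

lemma extreme_direction_exists:
  assumes "finite D" "D \<noteq> {}" "\<forall>d\<in>D. Re (cnj e * d) > 0"
  shows "\<exists>m\<in>D. \<forall>x\<in>D. cross m x \<ge> 0"
  using assms
proof (induction D rule: finite_ne_induct)
  case (singleton x)
  then show ?case by (simp add: cross_def)
next
  case (insert x F)
  then obtain m where m: "m \<in> F" "\<forall>y\<in>F. cross m y \<ge> 0" by auto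
  show ?case
  proof (cases "cross x m \<ge> 0")
    case True
    hence "\<forall>y\<in>F. cross x y \<ge> 0" using cross_nonneg_trans[OF True] m insert.prems by blast
    thus ?thesis by (auto simp: cross_def)
  next
    case False
    hence "cross m x \<ge> 0" by (simp add: cross_Re_Im algebra_simps)
    thus ?thesis using m by auto
  qed
qed

lemma support_vertex_exists:
  assumes "finite V" "V \<noteq> {}" "V \<subseteq> ball 0 1" "cmod \<xi> = 1"
  shows "\<exists>a. support_vertex V a \<xi>"
proof -
  have "Re (cnj (- \<xi>) * (p - \<xi>)) > 0" if "p \<in> V" for p
  proof -
    have "cmod p \<le> cmod \<xi>" "p \<noteq> \<xi>" using that assms(3,4) by auto
    from chord_points_inward[OF this] show ?thesis by simp
  qed
  hence "\<forall>d\<in>(\<lambda>p. p - \<xi>) ` V. Re (cnj (- \<xi>) * d) > 0" by blast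
  moreover have "(\<lambda>p. p - \<xi>) ` V \<noteq> {}" using assms(2) by simp
  ultimately obtain m where "m \<in> (\<lambda>p. p - \<xi>) ` V" "\<forall>x\<in>(\<lambda>p. p - \<xi>) ` V. cross m x \<ge> 0"
    using extreme_direction_exists[OF finite_imageI[OF assms(1)]] by blast
  thus ?thesis unfolding support_vertex_def by blast
qed

lemma support_vertex_limit:
  assumes "\<forall>n. support_vertex V a (y n)" "y \<longlonglongrightarrow> c"
  shows "support_vertex V a c"
  unfolding support_vertex_def
proof (intro conjI ballI)
  show "a \<in> V" using assms(1) by (simp add: support_vertex_def)
  fix p assume "p \<in> V"
  hence "\<forall>n. cross (a - y n) (p - y n) \<ge> 0" using assms(1) by (simp add: support_vertex_def)
  moreover have "(\<lambda>n. cross (a - y n) (p - y n)) \<longlonglongrightarrow> cross (a - c) (p - c)"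
    unfolding cross_def by (intro tendsto_intros assms(2))
  ultimately show "cross (a - c) (p - c) \<ge> 0" by (intro LIMSEQ_le_const) auto
qed

lemma cross_eq_0_imp_collinear:
  assumes "cross u q = 0" "u \<noteq> 0"
  shows "q = of_real (Re (cnj u * q) / (cmod u)\<^sup>2) * u"
proof -
  have "cnj u * q = of_real (Re (cnj u * q))" using assms(1) by (simp add: cross_def complex_eq_iff)
  hence "u * cnj u * q = of_real (Re (cnj u * q)) * u" by (simp only: mult.assoc) (simp add: mult.commute)
  thus ?thesis using assms(2) unfolding of_real_divide complex_norm_square
    by (simp add: field_simps)
qed

lemma support_vertices_collinear:
  assumes c: "cmod c = 1" and V: "V \<subseteq> ball 0 1"
    and w: "support_vertex V w c" and v: "support_vertex V v c"
  shows "\<exists>t>0. v - c = of_real t * (w - c)"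
proof -
  have "w \<in> V" "v \<in> V" using w v by (auto simp: support_vertex_def)
  hence "cmod w \<le> cmod c" "w \<noteq> c" "cmod v \<le> cmod c" "v \<noteq> c" using c V by auto
  hence inward: "Re (cnj c * (w - c)) < 0" "Re (cnj c * (v - c)) < 0"
    using chord_points_inward by blast+
  have "cross (w - c) (v - c) \<ge> 0" "cross (v - c) (w - c) \<ge> 0"
    using w v \<open>w \<in> V\<close> \<open>v \<in> V\<close> by (auto simp: support_vertex_def)
  moreover have "cross (v - c) (w - c) = - cross (w - c) (v - c)" by (simp add: cross_Re_Im)
  ultimately have "cross (w - c) (v - c) = 0" by linarith
  moreover have "w - c \<noteq> 0" using inward by auto
  ultimately obtain t where t: "v - c = of_real t * (w - c)"
    using cross_eq_0_imp_collinear by blast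
  hence "Re (cnj c * (v - c)) = t * Re (cnj c * (w - c))" unfolding t by (simp add: algebra_simps)
  hence "t > 0" using inward by (simp add: mult_less_0_iff)
  thus ?thesis using t by blast
qed

lemma support_vertices_same_image:
  assumes "cmod c = 1" "V \<subseteq> ball 0 1" "support_vertex V w c" "support_vertex V v c"
  shows "circle_symm v c = circle_symm w c"
proof -
  obtain t where "t > 0" "v - c = of_real t * (w - c)"
    using support_vertices_collinear[OF assms] by blast
  moreover have "cmod w < 1" "cmod v < 1" using assms(2-4) by (auto simp: support_vertex_def)
  ultimately show ?thesis using circle_symm_eq_if_collinear[OF assms(1), of w v t] by simp
qed

lemma support_edge_exists:
  assumes "finite V" "a0 \<in> V" "b0 \<in> V" "a0 \<noteq> b0"
  shows "\<exists>a\<in>V. \<exists>b\<in>V. a \<noteq> b \<and> (\<forall>p\<in>V. cross (b - a) (p - a) \<ge> 0)"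
proof -
  have "Max (cmod ` V) \<in> cmod ` V" using assms by (intro Max_in) auto
  then obtain a where "a \<in> V" "cmod a = Max (cmod ` V)" by auto
  hence a: "a \<in> V" "\<forall>p\<in>V. cmod p \<le> cmod a" using assms(1) by simp_all
  let ?D = "(\<lambda>p. p - a) ` (V - {a})"
  \<comment> \<open>seen from a vertex of largest modulus, the others lie in an open half-plane\<close>
  have "Re (cnj (- a) * (p - a)) > 0" if "p \<in> V - {a}" for p
  proof -
    have "cmod p \<le> cmod a" "p \<noteq> a" using that a by auto
    from chord_points_inward[OF this] show ?thesis by simp
  qed
  hence "\<forall>d\<in>?D. Re (cnj (- a) * d) > 0" by blast
  moreover have "?D \<noteq> {}" using assms by auto
  ultimately obtain m where m: "m \<in> ?D" "\<forall>x\<in>?D. cross m x \<ge> 0"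
    using extreme_direction_exists[OF finite_imageI[OF finite_Diff[OF assms(1)]]] by blast
  then obtain b where b: "b \<in> V" "b \<noteq> a" "m = b - a" by blast
  have "cross (b - a) (p - a) \<ge> 0" if "p \<in> V" for p
  proof (cases "p = a")
    case True
    thus ?thesis by (simp add: cross_def)
  next
    case False
    thus ?thesis using m(2) that b(3) by simp
  qed
  hence "a \<noteq> b \<and> (\<forall>p\<in>V. cross (b - a) (p - a) \<ge> 0)" using b(2) by auto
  thus ?thesis using a(1) b(1) by blast
qed

lemma support_vertices_on_edge_line:
  assumes V: "V \<subseteq> ball 0 1" and ab: "a \<in> V" "b \<in> V" "a \<noteq> b"
    and edge: "\<forall>p\<in>V. cross (b - a) (p - a) \<ge> 0"
  shows "\<exists>c t. cmod c = 1 \<and> support_vertex V a c \<and> support_vertex V b c \<and> t > 1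
    \<and> b - c = of_real t * (a - c)"
proof -
  have "a \<in> interior (ball 0 1)" "a - b \<noteq> 0" using ab V by auto
  then obtain d where d: "0 < d" "a + d *\<^sub>R (a - b) \<in> frontier (ball 0 1)"
    by (rule ray_to_frontier[OF bounded_ball]) blast
  define c where "c = a + of_real d * (a - b)"
  have c: "cmod c = 1" using d(2) by (simp add: c_def scaleR_conv_of_real)
  have "cross (a - c) (p - c) = d * cross (b - a) (p - a)"
    and "cross (b - c) (p - c) = (1 + d) * cross (b - a) (p - a)" for p
    by (simp_all add: c_def cross_Re_Im algebra_simps)
  hence "support_vertex V a c" "support_vertex V b c"
    using edge ab d(1) by (simp_all add: support_vertex_def)
  moreover have "b - c = of_real ((1 + d) / d) * (a - c)"
    using d(1) by (simp add: c_def complex_eq_iff field_simps)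
  moreover have "(1 + d) / d > 1" using d(1) by simp
  ultimately show ?thesis using c by blast
qed

section \<open>Dilation\<close>

text \<open>The modulus of the derivative of \<^term>\<open>circle_symm a\<close> at \<^term>\<open>z\<close>.\<close>

definition circle_symm_dilation :: "complex \<Rightarrow> complex \<Rightarrow> real" where
  "circle_symm_dilation a z = (1 - (cmod a)\<^sup>2) / (cmod (1 - cnj a * z))\<^sup>2"

lemma circle_symm_dilation_nonneg: "cmod a < 1 \<Longrightarrow> circle_symm_dilation a z \<ge> 0"
  unfolding circle_symm_dilation_def by (simp add: abs_square_le_1 less_imp_le)

lemma circle_symm_dilation_pos: "cmod a < 1 \<Longrightarrow> cmod z = 1 \<Longrightarrow> circle_symm_dilation a z > 0"
  unfolding circle_symm_dilation_def using circle_symm_denom_nonzero[of z a]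
  by (simp add: abs_square_less_1)

lemma circle_symm_dilation_ray:
  assumes c: "cmod c = 1" and t: "t > 0" and d: "d \<noteq> 0"
  shows "circle_symm_dilation (c + of_real t * d) c = - 2 * Re (cnj c * d) / (t * (cmod d)\<^sup>2) - 1"
proof -
  have den: "cmod (1 - cnj (c + of_real t * d) * c) = t * cmod d"
    using norm_one_minus_cnj_mult[OF c, of "c + of_real t * d"] t by (simp add: norm_mult)
  have num: "1 - (cmod (c + of_real t * d))\<^sup>2 = - 2 * t * Re (cnj c * d) - t\<^sup>2 * (cmod d)\<^sup>2"
  proof -
    have "(Re c)\<^sup>2 + (Im c)\<^sup>2 = 1" using c by (simp add: cmod_power2[symmetric])
    thus ?thesis unfolding cmod_power2 by (simp add: power2_eq_square algebra_simps)
  qed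
  show ?thesis
    using t d unfolding circle_symm_dilation_def den num by (simp add: field_simps power2_eq_square)
qed

lemma circle_symm_dilation_ray_diff:
  assumes c: "cmod c = 1" and d: "Re (cnj c * d) < 0" and t: "t > 0"
  shows "\<exists>k>0. circle_symm_dilation (c + d) c - circle_symm_dilation (c + of_real t * d) c
    = k * (t - 1)"
proof -
  have d0: "d \<noteq> 0" using d by auto
  define R where "R = Re (cnj c * d)"
  define D where "D = (cmod d)\<^sup>2"
  have "D > 0" using d0 by (simp add: D_def)
  have near: "circle_symm_dilation (c + d) c = - 2 * R / D - 1"
    using circle_symm_dilation_ray[OF c _ d0, of 1] by (simp add: R_def D_def)
  have far: "circle_symm_dilation (c + of_real t * d) c = - 2 * R / (t * D) - 1"
    using circle_symm_dilation_ray[OF c t d0] by (simp add: R_def D_def)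
  have "circle_symm_dilation (c + d) c - circle_symm_dilation (c + of_real t * d) c
      = - 2 * R / (t * D) * (t - 1)"
    unfolding near far using t \<open>D > 0\<close> by (simp add: field_simps)
  moreover have "- 2 * R / (t * D) > 0" using d t \<open>D > 0\<close> by (simp add: R_def)
  ultimately show ?thesis by blast
qed

section \<open>Approaching a point of the circle from one side\<close>

lemma sgn_add_dominated:
  fixes u v :: real
  assumes "\<bar>u\<bar> < \<bar>v\<bar>"
  shows "sgn (u + v) = sgn v"
  using assms by (auto simp: sgn_if abs_if split: if_splits)

lemma sgn_near_circle_point:
  fixes X y A I \<rho> :: real
  assumes circ: "(X + 1)\<^sup>2 + y\<^sup>2 = 1" and \<rho>: "X\<^sup>2 + y\<^sup>2 = \<rho>\<^sup>2" "0 \<le> \<rho>" "\<rho> < 1"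
    and A: "\<bar>I\<bar> * \<rho> < A"
  shows "sgn (I * X - A * y) = - sgn y"
proof (cases "\<rho> = 0")
  case True
  thus ?thesis using \<rho>(1) by (simp add: sum_power2_eq_zero_iff)
next
  case False
  have X: "X = - \<rho>\<^sup>2 / 2" using circ \<rho>(1) by (simp add: power2_eq_square algebra_simps)
  hence "y\<^sup>2 = \<rho>\<^sup>2 - \<rho>\<^sup>2 * \<rho>\<^sup>2 / 4" using \<rho>(1) by (simp add: power2_eq_square)
  moreover have "\<rho>\<^sup>2 * \<rho>\<^sup>2 \<le> \<rho>\<^sup>2" using \<rho>(2,3) by (intro mult_left_le) (auto simp: power_le_one)
  ultimately have y: "3 / 4 * \<rho>\<^sup>2 \<le> y\<^sup>2" by simp
  have A0: "A > 0" using A \<rho>(2) by (smt (verit) mult_nonneg_nonneg abs_ge_zero)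
  have "(I * X)\<^sup>2 = (\<bar>I\<bar> * \<rho>)\<^sup>2 * \<rho>\<^sup>2 / 4" using X by (simp add: power2_eq_square)
  also have "\<dots> < A\<^sup>2 * \<rho>\<^sup>2 / 4"
    using A \<rho>(2) False by (simp add: power_strict_mono)
  also have "\<dots> \<le> (A * y)\<^sup>2"
  proof -
    have "\<rho>\<^sup>2 \<le> 4 * y\<^sup>2" using y zero_le_power2[of \<rho>] by linarith
    hence "A\<^sup>2 * \<rho>\<^sup>2 \<le> A\<^sup>2 * (4 * y\<^sup>2)" by (simp add: mult_left_mono)
    thus ?thesis by (simp add: power_mult_distrib)
  qed
  finally have "\<bar>I * X\<bar> < \<bar>- (A * y)\<bar>"
    by (metis abs_minus_cancel abs_ge_zero power2_abs power_less_imp_less_base)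
  hence "sgn (I * X - A * y) = sgn (- (A * y))" using sgn_add_dominated by fastforce
  thus ?thesis using A0 by (simp add: sgn_mult)
qed

text \<open>Near \<^term>\<open>c\<close>, a point of the circle lies to the left of the line through \<^term>\<open>c\<close> in
  the inward direction \<^term>\<open>d\<close> iff it lies clockwise from \<^term>\<open>c\<close>.\<close>

lemma eventually_sgn_cross_circle:
  assumes c: "cmod c = 1" and d: "Re (cnj c * d) < 0"
  shows "\<forall>\<^sub>F z in nhds c. cmod z = 1 \<longrightarrow> sgn (cross d (z - c)) = - sgn (Im (cnj c * z))"
proof -
  define e where "e = cnj d * c"
  define A where "A = - Re e"
  have A0: "A > 0" using d by (simp add: A_def e_def algebra_simps)
  define r where "r = min 1 (A / (\<bar>Im e\<bar> + 1))"
  have r0: "r > 0" using A0 by (simp add: r_def)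
  have cc: "c * cnj c = 1" using mult_cnj_eq_1[OF c] .
  have "sgn (cross d (z - c)) = - sgn (Im (cnj c * z))" if z: "cmod z = 1" "dist z c < r" for z
  proof -
    define \<zeta> where "\<zeta> = cnj c * z"
    have "z = c * \<zeta>" using cc by (simp add: \<zeta>_def mult.assoc[symmetric])
    hence "cnj d * (z - c) = e * (\<zeta> - 1)" by (simp add: e_def algebra_simps)
    hence "cross d (z - c) = Im (e * (\<zeta> - 1))" by (simp only: cross_def)
    hence cross: "cross d (z - c) = Im e * (Re \<zeta> - 1) - A * Im \<zeta>"
      by (simp add: A_def algebra_simps)
    have "cmod \<zeta> = 1" using z c by (simp add: \<zeta>_def norm_mult)
    hence circ: "((Re \<zeta> - 1) + 1)\<^sup>2 + (Im \<zeta>)\<^sup>2 = 1" by (simp add: cmod_power2[symmetric])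
    have "z - c = c * (\<zeta> - 1)" using \<open>z = c * \<zeta>\<close> by (simp add: algebra_simps)
    hence \<rho>: "cmod (z - c) = cmod (\<zeta> - 1)" using c by (simp add: norm_mult)
    hence "(Re \<zeta> - 1)\<^sup>2 + (Im \<zeta>)\<^sup>2 = (cmod (z - c))\<^sup>2" by (simp add: cmod_power2)
    moreover have "cmod (z - c) < 1" using z(2) by (simp add: r_def dist_norm)
    moreover have "\<bar>Im e\<bar> * cmod (z - c) < A"
    proof -
      have "\<bar>Im e\<bar> * cmod (z - c) \<le> \<bar>Im e\<bar> * r" using z(2) by (simp add: dist_norm mult_left_mono)
      also have "\<dots> \<le> \<bar>Im e\<bar> * (A / (\<bar>Im e\<bar> + 1))" by (intro mult_left_mono) (auto simp: r_def)
      also have "\<dots> < A" using A0 by (simp add: field_simps)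
      finally show ?thesis .
    qed
    ultimately show ?thesis
      using sgn_near_circle_point[OF circ] cross by (simp add: \<zeta>_def)
  qed
  thus ?thesis unfolding eventually_nhds_metric using r0 by blast
qed

lemma mult_pos_iff_mult_neg_if_sgn_opposite:
  fixes s x y :: real
  assumes "sgn x = - sgn y"
  shows "s * x > 0 \<longleftrightarrow> s * y < 0"
  using assms by (auto simp: sgn_if zero_less_mult_iff mult_less_0_iff split: if_splits)

text \<open>With \<^term>\<open>s = 1\<close> the points \<^term>\<open>y n\<close> approach \<^term>\<open>c\<close> clockwise, with
  \<^term>\<open>s = -1\<close> counterclockwise.\<close>

definition tends_from_side :: "real \<Rightarrow> (nat \<Rightarrow> complex) \<Rightarrow> complex \<Rightarrow> bool" where
  "tends_from_side s y c \<longleftrightarrow> (\<forall>n. cmod (y n) = 1) \<and> y \<longlonglongrightarrow> c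
     \<and> (\<forall>\<^sub>F n in sequentially. s * Im (cnj c * y n) < 0)"

lemma tends_from_side_norm:
  assumes "tends_from_side s y c"
  shows "cmod c = 1"
proof -
  have "(\<lambda>n. cmod (y n)) \<longlonglongrightarrow> cmod c" using assms by (intro tendsto_intros) (simp add: tends_from_side_def)
  moreover have "(\<lambda>n. cmod (y n)) = (\<lambda>n. 1)" using assms by (simp add: tends_from_side_def)
  ultimately show ?thesis by (simp add: LIMSEQ_const_iff)
qed

lemma tends_from_side_iff_cross:
  assumes c: "cmod c = 1" and d: "Re (cnj c * d) < 0"
    and y: "\<forall>n. cmod (y n) = 1" "y \<longlonglongrightarrow> c"
  shows "tends_from_side s y c \<longleftrightarrow> (\<forall>\<^sub>F n in sequentially. s * cross d (y n - c) > 0)"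
proof -
  have "\<forall>\<^sub>F n in sequentially. sgn (cross d (y n - c)) = - sgn (Im (cnj c * y n))"
    using eventually_compose_filterlim[OF eventually_sgn_cross_circle[OF c d] y(2)] y(1) by simp
  hence "\<forall>\<^sub>F n in sequentially. (s * Im (cnj c * y n) < 0) = (s * cross d (y n - c) > 0)"
    by eventually_elim (simp add: mult_pos_iff_mult_neg_if_sgn_opposite)
  thus ?thesis using y by (simp add: tends_from_side_def eventually_subst)
qed

lemma tends_from_side_circle_symm:
  assumes y: "tends_from_side s y c" and w: "cmod w < 1"
  shows "tends_from_side s (\<lambda>n. circle_symm w (y n)) (circle_symm w c)"
proof -
  let ?c' = "circle_symm w c" and ?y' = "\<lambda>n. circle_symm w (y n)"
  have c: "cmod c = 1" and y1: "\<forall>n. cmod (y n) = 1" and lim: "y \<longlonglongrightarrow> c"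
    using y tends_from_side_norm by (auto simp: tends_from_side_def)
  have c': "cmod ?c' = 1" using norm_circle_symm[OF c w] .
  have "w \<noteq> c" using c w by auto
  hence d: "Re (cnj c * (w - c)) < 0" using chord_points_inward c w by simp
  have d': "Re (cnj ?c' * (c - ?c')) < 0"
    using chord_points_inward[of c ?c'] c c' circle_symm_neq[OF c w] by simp
  have y'1: "\<forall>n. cmod (?y' n) = 1" using norm_circle_symm y1 w by blast
  have lim': "?y' \<longlonglongrightarrow> ?c'" using isCont_tendsto_compose[OF isCont_circle_symm[OF c w] lim] .
  have "\<forall>\<^sub>F n in sequentially. s * cross (w - c) (y n - c) > 0"
    using y tends_from_side_iff_cross[OF c d y1 lim] by simp
  hence "\<forall>\<^sub>F n in sequentially. s * cross (c - ?c') (?y' n - ?c') > 0"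
  proof eventually_elim
    case (elim n)
    obtain k where "k > 0" "cross (c - ?c') (?y' n - ?c') = k * cross (w - c) (y n - c)"
      using cross_circle_symm[OF y1[rule_format] c w] by blast
    thus ?case using elim by (simp add: mult.left_commute[of s] zero_less_mult_iff)
  qed
  thus ?thesis using tends_from_side_iff_cross[OF c' d' y'1 lim'] by simp
qed

lemma tends_from_side_subseq:
  assumes "tends_from_side s y c" "strict_mono r"
  shows "tends_from_side s (y \<circ> r) c"
  using assms LIMSEQ_subseq_LIMSEQ eventually_subseq by (fastforce simp: tends_from_side_def)

lemma tends_from_side_exists:
  assumes c: "cmod c = 1" and s: "s \<in> {-1, 1}"
  shows "\<exists>y. tends_from_side s y c \<and> inj y"
proof -
  define y where "y n = c * cis (- s / real (Suc n))" for n
  have cc: "cnj c * c = 1" using mult_cnj_eq_1[OF c] by (simp add: mult.commute)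
  have cy: "cnj c * y n = cis (- s / real (Suc n))" for n
    using cc by (simp add: y_def mult.assoc[symmetric])
  have angle: "0 < 1 / real (Suc n)" "1 / real (Suc n) < pi" for n
  proof -
    have "1 / real (Suc n) \<le> 1" by simp
    thus "1 / real (Suc n) < pi" using pi_gt3 by linarith
  qed simp
  have "s * Im (cnj c * y n) = - sin (1 / real (Suc n))" for n
    using s by (auto simp: cy)
  hence "s * Im (cnj c * y n) < 0" for n using sin_gt_zero[OF angle] by simp
  moreover have "(\<lambda>n. - s / real (Suc n)) \<longlonglongrightarrow> 0"
    using LIMSEQ_Suc[OF lim_const_over_n[of "- s"]] by simp
  hence "y \<longlonglongrightarrow> c * cis 0" unfolding y_def by (intro tendsto_mult tendsto_const tendsto_cis)
  moreover have "inj y"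
  proof (rule injI)
    fix n m assume "y n = y m"
    hence "Re (cnj c * y n) = Re (cnj c * y m)" by simp
    hence "cos (1 / real (Suc n)) = cos (1 / real (Suc m))" using s by (auto simp: cy)
    moreover have b: "0 \<le> 1 / real (Suc k)" "1 / real (Suc k) \<le> pi" for k
      using angle[of k] by linarith+
    ultimately have "1 / real (Suc n) = 1 / real (Suc m)" using cos_inj_pi[OF b b] by blast
    thus "n = m" by simp
  qed
  moreover have "\<forall>n. cmod (y n) = 1" using c by (simp add: y_def norm_mult)
  ultimately show ?thesis unfolding tends_from_side_def by (auto intro: always_eventually)
qed

section \<open>Words of symmetries\<close>

fun word_map :: "complex list \<Rightarrow> complex \<Rightarrow> complex" where
  "word_map [] z = z"
| "word_map (a # W) z = word_map W (circle_symm a z)"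

text \<open>\<^term>\<open>word_scale\<close> and \<^term>\<open>word_factor\<close> are the pieces of the M\<ouml>bius difference
  quotient, see \<open>word_map_diff\<close>.\<close>

fun word_scale :: "complex list \<Rightarrow> complex" where
  "word_scale [] = 1"
| "word_scale (a # W) = - of_real (1 - (cmod a)\<^sup>2) * word_scale W"

fun word_factor :: "complex list \<Rightarrow> complex \<Rightarrow> complex" where
  "word_factor [] z = 1"
| "word_factor (a # W) z = word_factor W (circle_symm a z) / (1 - cnj a * z)"

fun word_dilation :: "complex list \<Rightarrow> complex \<Rightarrow> real" where
  "word_dilation [] z = 1"
| "word_dilation (a # W) z = circle_symm_dilation a z * word_dilation W (circle_symm a z)"

lemma word_map_diff:
  "set W \<subseteq> ball 0 1 \<Longrightarrow> cmod z = 1 \<Longrightarrow> cmod w = 1 \<Longrightarrow>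
    word_map W z - word_map W w = (z - w) * word_scale W * word_factor W z * word_factor W w"
proof (induction W arbitrary: z w)
  case Nil
  then show ?case by simp
next
  case (Cons a W)
  have a: "cmod a < 1" and W: "set W \<subseteq> ball 0 1" using Cons.prems by auto
  have "1 - cnj a * z \<noteq> 0" "1 - cnj a * w \<noteq> 0"
    using circle_symm_denom_nonzero Cons.prems a by blast+
  moreover have "word_map W (circle_symm a z) - word_map W (circle_symm a w)
      = (circle_symm a z - circle_symm a w) * word_scale W
          * word_factor W (circle_symm a z) * word_factor W (circle_symm a w)"
    using Cons.IH W Cons.prems a norm_circle_symm by blast
  ultimately show ?case using circle_symm_diff[of a z w] by (simp add: field_simps)
qed

lemma word_scale_factor_fixed_pair:
  assumes "set W \<subseteq> ball 0 1" "cmod p = 1" "cmod q = 1" "p \<noteq> q"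
    and "word_map W p = p" "word_map W q = q"
  shows "word_scale W * word_factor W p * word_factor W q = 1"
proof -
  have "p - q = (p - q) * (word_scale W * word_factor W p * word_factor W q)"
    using word_map_diff[OF assms(1-3)] assms(5,6) by (simp add: mult.assoc)
  thus ?thesis using assms(4) by simp
qed

lemma word_factor_eq_at_fixed_points:
  assumes W: "set W \<subseteq> ball 0 1" and S: "cmod p = 1" "cmod q = 1" "cmod r = 1"
    and distinct: "p \<noteq> q" "p \<noteq> r" "q \<noteq> r"
    and fixed: "word_map W p = p" "word_map W q = q" "word_map W r = r"
  shows "word_factor W p = word_factor W q"
proof -
  let ?K = "word_scale W" and ?e = "word_factor W"
  have pq: "?K * ?e p * ?e q = 1" and pr: "?K * ?e p * ?e r = 1" and qr: "?K * ?e q * ?e r = 1"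
    using word_scale_factor_fixed_pair[OF W] S distinct fixed by blast+
  have "?e p * (?K * ?e r) = ?e q * (?K * ?e r)" using pr qr by (simp add: ac_simps)
  moreover have "?K * ?e r \<noteq> 0" using qr by auto
  ultimately show ?thesis by simp
qed

lemma word_map_eq_id:
  assumes W: "set W \<subseteq> ball 0 1" and S: "cmod p = 1" "cmod q = 1" "cmod r = 1"
    and distinct: "p \<noteq> q" "p \<noteq> r" "q \<noteq> r"
    and fixed: "word_map W p = p" "word_map W q = q" "word_map W r = r"
    and z: "cmod z = 1"
  shows "word_map W z = z"
proof -
  let ?L = "word_scale W * word_factor W z * word_factor W p"
  have e: "word_factor W p = word_factor W q"
    using word_factor_eq_at_fixed_points[OF W S distinct fixed] .
  have dp: "word_map W z - p = (z - p) * ?L"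
    using word_map_diff[OF W z S(1)] fixed(1) by (simp add: ac_simps)
  have dq: "word_map W z - q = (z - q) * ?L"
    using word_map_diff[OF W z S(2)] fixed(2) e by (simp add: ac_simps)
  have "q - p = (word_map W z - p) - (word_map W z - q)" by simp
  also have "\<dots> = (q - p) * ?L" unfolding dp dq by (simp add: algebra_simps)
  finally have "q - p = (q - p) * ?L" .
  hence "?L = 1" using distinct(1) by simp
  thus ?thesis using dp by simp
qed

lemma word_dilation_eq:
  "set W \<subseteq> ball 0 1 \<Longrightarrow> cmod z = 1 \<Longrightarrow>
    word_dilation W z = cmod (word_scale W) * (cmod (word_factor W z))\<^sup>2"
proof (induction W arbitrary: z)
  case Nil
  then show ?case by simp
next
  case (Cons a W)
  have a: "cmod a < 1" and W: "set W \<subseteq> ball 0 1" using Cons.prems by auto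
  have "1 - (cmod a)\<^sup>2 \<ge> 0" using a by (simp add: abs_square_le_1 less_imp_le)
  hence scale: "cmod (word_scale (a # W)) = (1 - (cmod a)\<^sup>2) * cmod (word_scale W)"
    by (simp only: word_scale.simps norm_mult norm_minus_cancel norm_of_real abs_of_nonneg)
  have factor: "cmod (word_factor (a # W) z) = cmod (word_factor W (circle_symm a z)) / cmod (1 - cnj a * z)"
    by (simp add: norm_divide)
  have IH: "word_dilation W (circle_symm a z)
      = cmod (word_scale W) * (cmod (word_factor W (circle_symm a z)))\<^sup>2"
    using Cons.IH W Cons.prems a norm_circle_symm by blast
  show ?case
    unfolding word_dilation.simps IH scale factor circle_symm_dilation_def
    using circle_symm_denom_nonzero[of z a] Cons.prems a by (simp add: field_simps power2_eq_square)
qed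

lemma word_dilation_eq_1:
  assumes W: "set W \<subseteq> ball 0 1" and id: "\<forall>z. cmod z = 1 \<longrightarrow> word_map W z = z"
    and c: "cmod c = 1"
  shows "word_dilation W c = 1"
proof -
  have S: "cmod (- c) = 1" "cmod (\<i> * c) = 1" using c by (auto simp: norm_mult)
  have "c \<noteq> 0" using c by auto
  hence "c \<noteq> - c" "c \<noteq> \<i> * c" "- c \<noteq> \<i> * c"
    by (auto simp: complex_eq_iff)
  hence "word_factor W c = word_factor W (- c)"
    and "word_scale W * word_factor W c * word_factor W (- c) = 1"
    using word_factor_eq_at_fixed_points[OF W c S] word_scale_factor_fixed_pair[OF W c S(1)] id c S
    by blast+
  hence "cmod (word_scale W) * (cmod (word_factor W c))\<^sup>2 = 1"
    by (metis norm_mult norm_one power2_eq_square mult.assoc)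
  thus ?thesis using word_dilation_eq[OF W c] by simp
qed

lemma word_dilation_nonneg: "set W \<subseteq> ball 0 1 \<Longrightarrow> word_dilation W z \<ge> 0"
  by (induction W arbitrary: z) (auto intro!: mult_nonneg_nonneg circle_symm_dilation_nonneg)

lemma word_dilation_pos: "set W \<subseteq> ball 0 1 \<Longrightarrow> cmod z = 1 \<Longrightarrow> word_dilation W z > 0"
  by (induction W arbitrary: z) (auto intro!: mult_pos_pos circle_symm_dilation_pos simp: norm_circle_symm)

fun admissible_word :: "complex set \<Rightarrow> complex list \<Rightarrow> complex \<Rightarrow> bool" where
  "admissible_word V [] z \<longleftrightarrow> True"
| "admissible_word V (a # W) z \<longleftrightarrow> support_vertex V a z \<and> admissible_word V W (circle_symm a z)"

fun extremal_word :: "complex set \<Rightarrow> real \<Rightarrow> complex list \<Rightarrow> complex \<Rightarrow> bool" where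
  "extremal_word V s [] z \<longleftrightarrow> True"
| "extremal_word V s (a # W) z \<longleftrightarrow>
     (\<forall>v. support_vertex V v z \<longrightarrow> s * (circle_symm_dilation a z - circle_symm_dilation v z) \<ge> 0)
     \<and> extremal_word V s W (circle_symm a z)"

lemma admissible_word_set: "admissible_word V W z \<Longrightarrow> set W \<subseteq> V"
  by (induction W arbitrary: z) (auto simp: support_vertex_def)

lemma support_vertex_dilation_extremal:
  assumes V: "V \<subseteq> ball 0 1" and y: "tends_from_side s y c"
    and w: "\<forall>n. support_vertex V w (y n)" and v: "support_vertex V v c"
  shows "s * (circle_symm_dilation w c - circle_symm_dilation v c) \<ge> 0"
proof -
  have c: "cmod c = 1" and y1: "\<forall>n. cmod (y n) = 1" and lim: "y \<longlonglongrightarrow> c"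
    using y tends_from_side_norm by (auto simp: tends_from_side_def)
  have wc: "support_vertex V w c" using support_vertex_limit[OF w lim] .
  obtain t where t: "t > 0" "v = c + of_real t * (w - c)"
    using support_vertices_collinear[OF c V wc v] by (auto simp: algebra_simps)
  have "w \<in> V" using wc by (simp add: support_vertex_def)
  hence "cmod w \<le> cmod c" "w \<noteq> c" using c V by auto
  hence d: "Re (cnj c * (w - c)) < 0" using chord_points_inward by blast
  have "\<forall>\<^sub>F n in sequentially. s * cross (w - c) (y n - c) > 0"
    using y tends_from_side_iff_cross[OF c d y1 lim] by simp
  then obtain N where N: "s * cross (w - c) (y N - c) > 0"
    by (auto simp: eventually_sequentially)
  have "cross (w - y N) (v - y N) = (t - 1) * cross (w - c) (y N - c)"
    unfolding t(2) by (simp add: cross_Re_Im algebra_simps)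
  moreover have "cross (w - y N) (v - y N) \<ge> 0" using w v by (simp add: support_vertex_def)
  ultimately have st: "s * (t - 1) \<ge> 0" using N
    by (auto simp: zero_le_mult_iff zero_less_mult_iff)
  obtain k where "k > 0"
    "circle_symm_dilation w c - circle_symm_dilation v c = k * (t - 1)"
    using circle_symm_dilation_ray_diff[OF c d t(1)] t(2) by auto
  thus ?thesis using st by (simp add: mult.left_commute[of s])
qed

lemma admissible_word_limit:
  assumes V: "V \<subseteq> ball 0 1"
  shows "tends_from_side s y c \<Longrightarrow> \<forall>n. admissible_word V W (y n) \<Longrightarrow>
    admissible_word V W c \<and> extremal_word V s W c"
proof (induction W arbitrary: y c)
  case Nil
  then show ?case by simp
next
  case (Cons a W)
  have a: "\<forall>n. support_vertex V a (y n)" and W: "\<forall>n. admissible_word V W (circle_symm a (y n))"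
    using Cons.prems(2) by auto
  have ac: "support_vertex V a c"
    using support_vertex_limit[OF a] Cons.prems(1) by (simp add: tends_from_side_def)
  hence "cmod a < 1" using V by (auto simp: support_vertex_def)
  hence "admissible_word V W (circle_symm a c) \<and> extremal_word V s W (circle_symm a c)"
    using Cons.IH[OF tends_from_side_circle_symm[OF Cons.prems(1)] W] by simp
  thus ?case
    using ac support_vertex_dilation_extremal[OF V Cons.prems(1) a] by simp
qed

lemma extremal_word_dilation_ge:
  assumes V: "V \<subseteq> ball 0 1"
  shows "cmod c = 1 \<Longrightarrow> admissible_word V W c \<Longrightarrow> extremal_word V 1 W c \<Longrightarrow>
    admissible_word V W' c \<Longrightarrow> length W' = length W \<Longrightarrow> word_dilation W' c \<le> word_dilation W c"
proof (induction W arbitrary: W' c)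
  case Nil
  then show ?case by simp
next
  case (Cons a W)
  obtain a' W'' where W': "W' = a' # W''" using Cons.prems(5) by (cases W') auto
  have a: "support_vertex V a c" and a': "support_vertex V a' c"
    using Cons.prems(2,4) W' by auto
  hence "cmod a < 1" using V by (auto simp: support_vertex_def)
  have image: "circle_symm a' c = circle_symm a c"
    using support_vertices_same_image[OF Cons.prems(1) V a a'] .
  have "circle_symm_dilation a' c \<le> circle_symm_dilation a c"
    using Cons.prems(3) a' by auto
  moreover have "word_dilation W'' (circle_symm a c) \<le> word_dilation W (circle_symm a c)"
    using Cons.IH[of "circle_symm a c" W''] Cons.prems W' image norm_circle_symm \<open>cmod a < 1\<close>
    by auto
  moreover have "set W' \<subseteq> V" using admissible_word_set Cons.prems(4) by blast
  hence "word_dilation W'' (circle_symm a c) \<ge> 0"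
    using W' V by (intro word_dilation_nonneg) auto
  ultimately show ?case
    using W' image circle_symm_dilation_nonneg[OF \<open>cmod a < 1\<close>] by (simp add: mult_mono)
qed

lemma extremal_words_dilation_less:
  assumes V: "V \<subseteq> ball 0 1" and c: "cmod c = 1"
    and a: "support_vertex V a c" and b: "support_vertex V b c"
    and t: "t > 1" "b - c = of_real t * (a - c)"
    and W1: "admissible_word V W1 c" "extremal_word V 1 W1 c"
    and W2: "admissible_word V W2 c" "extremal_word V (-1) W2 c"
    and len: "length W2 = length W1" "W1 \<noteq> []"
  shows "word_dilation W2 c < word_dilation W1 c"
proof -
  obtain w T1 where w: "W1 = w # T1" using len(2) by (cases W1) auto
  obtain w' T2 where w': "W2 = w' # T2" using len(1) w by (cases W2) auto
  have vw: "support_vertex V w c" "support_vertex V w' c" using W1(1) W2(1) w w' by auto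
  hence w1: "cmod w < 1" using V by (auto simp: support_vertex_def)
  let ?c' = "circle_symm w c"
  have image: "circle_symm w' c = ?c'" using support_vertices_same_image[OF c V vw] .
  have "a \<in> V" using a by (simp add: support_vertex_def)
  hence "cmod a \<le> cmod c" "a \<noteq> c" using c V by auto
  hence "Re (cnj c * (a - c)) < 0" using chord_points_inward by blast
  then obtain k where "k > 0" "circle_symm_dilation (c + (a - c)) c
      - circle_symm_dilation (c + of_real t * (a - c)) c = k * (t - 1)"
    using circle_symm_dilation_ray_diff[OF c _, of "a - c" t] t(1) by auto
  moreover have "c + of_real t * (a - c) = b" using t(2) by (simp add: algebra_simps)
  ultimately have "k > 0" "circle_symm_dilation a c - circle_symm_dilation b c = k * (t - 1)"
    by simp_all
  hence "circle_symm_dilation b c < circle_symm_dilation a c"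
    using t(1) by (metis diff_gt_0_iff_gt mult_pos_pos)
  moreover have "circle_symm_dilation a c \<le> circle_symm_dilation w c" using W1(2) w a by auto
  moreover have "circle_symm_dilation w' c \<le> circle_symm_dilation b c" using W2(2) w' b by auto
  ultimately have head: "circle_symm_dilation w' c < circle_symm_dilation w c" by linarith
  have "set W2 \<subseteq> V" using admissible_word_set W2(1) by blast
  hence "set T2 \<subseteq> ball 0 1" using w' V by auto
  hence pos: "word_dilation T2 ?c' > 0" using word_dilation_pos norm_circle_symm[OF c w1] by blast
  have tails: "word_dilation T2 ?c' \<le> word_dilation T1 ?c'"
    using extremal_word_dilation_ge[OF V norm_circle_symm[OF c w1]] W1 W2 w w' image len(1)
    by auto
  have "word_dilation W2 c = circle_symm_dilation w' c * word_dilation T2 ?c'"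
    using w' image by simp
  also have "\<dots> < circle_symm_dilation w c * word_dilation T2 ?c'" using head pos by simp
  also have "\<dots> \<le> circle_symm_dilation w c * word_dilation T1 ?c'"
    using tails circle_symm_dilation_nonneg[OF w1] by (rule mult_left_mono)
  also have "\<dots> = word_dilation W1 c" using w by simp
  finally show ?thesis .
qed

section \<open>The boundary map and its itineraries\<close>

lemma boundary_extension_tendsto:
  assumes \<tau>: "boundary_extension V \<tau>" and \<xi>: "\<xi> \<in> circle_at_infinity"
    and f: "(f \<longlongrightarrow> \<xi>) F" and region: "\<forall>\<^sub>F x in F. f x \<in> billiard_region V a"
  shows "((\<lambda>x. geod_symm a (f x)) \<longlongrightarrow> \<tau> \<xi>) F"
proof (rule tendstoI)
  fix \<epsilon> :: real assume "\<epsilon> > 0"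
  then obtain \<delta> where "\<delta> > 0"
    and \<delta>: "\<forall>a x. x \<in> billiard_region V a \<and> dist x \<xi> < \<delta> \<longrightarrow> dist (geod_symm a x) (\<tau> \<xi>) < \<epsilon>"
    using \<tau> \<xi> unfolding boundary_extension_def by blast
  have "\<forall>\<^sub>F x in F. dist (f x) \<xi> < \<delta> \<and> f x \<in> billiard_region V a"
    using tendstoD[OF f \<open>\<delta> > 0\<close>] region by (rule eventually_conj)
  thus "\<forall>\<^sub>F x in F. dist (geod_symm a (f x)) (\<tau> \<xi>) < \<epsilon>"
    by (rule eventually_mono) (use \<delta> in blast)
qed

lemma support_segment_in_billiard_region:
  assumes V: "hyp_convex_polygon V" and \<xi>: "cmod \<xi> = 1" and a: "support_vertex V a \<xi>"
  shows "\<forall>\<^sub>F t in at_right 0. \<xi> + of_real t * (a - \<xi>) \<in> billiard_region V a"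
proof -
  let ?x = "\<lambda>t::real. \<xi> + of_real t * (a - \<xi>)"
  have fin: "finite V" and Vb: "V \<subseteq> ball 0 1"
    using V by (auto simp: hyp_convex_polygon_def hyp_plane_def)
  have a1: "cmod a < 1" using a Vb by (auto simp: support_vertex_def)
  have "convex hull V \<subseteq> ball 0 1" using Vb by (intro hull_minimal convex_ball)
  hence "\<xi> \<in> - (convex hull V)" using \<xi> by auto
  moreover have "open (- (convex hull V))"
    using fin by (intro open_Compl compact_imp_closed finite_imp_compact_convex_hull)
  moreover have "(?x \<longlongrightarrow> \<xi>) (at_right 0)" by (intro tendsto_eq_intros) auto
  ultimately have outside: "\<forall>\<^sub>F t in at_right 0. ?x t \<notin> convex hull V"
    using topological_tendstoD by fastforce
  have "\<forall>\<^sub>F t in at_right 0. 0 < t \<and> t < (1::real)"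
    unfolding eventually_at_right_field by (intro exI[of _ 1]) auto
  thus ?thesis using outside
  proof eventually_elim
    case (elim t)
    have "cmod (?x t) = cmod (of_real (1 - t) * \<xi> + of_real t * a)" by (simp add: algebra_simps)
    also have "\<dots> \<le> (1 - t) + t * cmod a"
      using norm_triangle_ineq[of "of_real (1 - t) * \<xi>" "of_real t * a"] elim \<xi>
      by (simp add: norm_mult del: of_real_diff)
    also have "\<dots> < 1" using elim a1 by (simp add: mult_less_cancel_left1)
    finally have "?x t \<in> hyp_plane" by (simp add: hyp_plane_def)
    moreover have "cross (a - ?x t) (p - ?x t) \<ge> 0" if "p \<in> convex hull V" for p
    proof -
      have "cross (a - ?x t) (p - ?x t) = (1 - t) * cross (a - \<xi>) (p - \<xi>)"
        by (simp add: cross_Re_Im algebra_simps)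
      moreover have "cross (a - \<xi>) (p - \<xi>) \<ge> 0"
        using cross_nonneg_convex_hull[OF _ that] a by (simp add: support_vertex_def)
      ultimately show ?thesis using elim by simp
    qed
    ultimately show ?case using elim a by (simp add: billiard_region_def support_vertex_def)
  qed
qed

lemma boundary_extension_eq_circle_symm:
  assumes V: "hyp_convex_polygon V" and \<tau>: "boundary_extension V \<tau>"
    and \<xi>: "cmod \<xi> = 1" and a: "support_vertex V a \<xi>"
  shows "\<tau> \<xi> = circle_symm a \<xi>"
proof -
  let ?x = "\<lambda>t::real. \<xi> + of_real t * (a - \<xi>)"
  have a1: "cmod a < 1"
    using a V by (auto simp: support_vertex_def hyp_convex_polygon_def hyp_plane_def)
  have lim: "(?x \<longlongrightarrow> \<xi>) (at_right 0)" by (intro tendsto_eq_intros) auto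
  have "((\<lambda>t. geod_symm a (?x t)) \<longlongrightarrow> \<tau> \<xi>) (at_right 0)"
    using boundary_extension_tendsto[OF \<tau> _ lim support_segment_in_billiard_region[OF V \<xi> a]] \<xi>
    by (simp add: circle_at_infinity_def)
  moreover have "((\<lambda>t. geod_symm a (?x t)) \<longlongrightarrow> geod_symm a \<xi>) (at_right 0)"
    using isCont_tendsto_compose[OF isCont_geod_symm lim] \<xi> a1 by simp
  ultimately have "\<tau> \<xi> = geod_symm a \<xi>" by (rule tendsto_unique[rotated]) simp
  thus ?thesis using geod_symm_eq_circle_symm[OF \<xi> a1] by simp
qed

definition circle_billiard_map :: "complex set \<Rightarrow> (complex \<Rightarrow> complex) \<Rightarrow> bool" where
  "circle_billiard_map V \<tau> \<longleftrightarrow>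
     (\<forall>z a. cmod z = 1 \<longrightarrow> support_vertex V a z \<longrightarrow> \<tau> z = circle_symm a z)"

lemma circle_billiard_map_boundary_extension:
  "hyp_convex_polygon V \<Longrightarrow> boundary_extension V \<tau> \<Longrightarrow> circle_billiard_map V \<tau>"
  using boundary_extension_eq_circle_symm by (auto simp: circle_billiard_map_def)

fun itinerary :: "complex set \<Rightarrow> (complex \<Rightarrow> complex) \<Rightarrow> nat \<Rightarrow> complex \<Rightarrow> complex list" where
  "itinerary V \<tau> 0 z = []"
| "itinerary V \<tau> (Suc n) z = (SOME a. support_vertex V a z) # itinerary V \<tau> n (\<tau> z)"

lemma itinerary_props:
  assumes V: "finite V" "V \<noteq> {}" "V \<subseteq> ball 0 1" and \<tau>: "circle_billiard_map V \<tau>"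
  shows "cmod z = 1 \<Longrightarrow> admissible_word V (itinerary V \<tau> n z) z
    \<and> word_map (itinerary V \<tau> n z) z = (\<tau> ^^ n) z \<and> length (itinerary V \<tau> n z) = n"
proof (induction n arbitrary: z)
  case 0
  then show ?case by simp
next
  case (Suc n)
  let ?a = "SOME a. support_vertex V a z"
  have a: "support_vertex V ?a z" using support_vertex_exists[OF V Suc.prems] by (rule someI_ex)
  hence "cmod ?a < 1" using V(3) by (auto simp: support_vertex_def)
  moreover have \<tau>z: "\<tau> z = circle_symm ?a z" using \<tau> Suc.prems a by (simp add: circle_billiard_map_def)
  ultimately have "cmod (\<tau> z) = 1" using norm_circle_symm Suc.prems by simp
  thus ?case using Suc.IH a \<tau>z by (simp add: funpow_swap1)
qed

lemma finite_range_imp_constant_subseq: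
  fixes f :: "nat \<Rightarrow> 'a"
  assumes "finite (range f)"
  shows "\<exists>(r :: nat \<Rightarrow> nat) x. strict_mono r \<and> (\<forall>n. f (r n) = x)"
proof -
  obtain x where "infinite (f -` {x})" using inf_img_fin_dom[OF assms infinite_UNIV_nat] by blast
  then obtain r :: "nat \<Rightarrow> nat" where "strict_mono r" "\<forall>n. r n \<in> f -` {x}"
    using infinite_enumerate by blast
  thus ?thesis by auto
qed

text \<open>The words of \<^term>\<open>\<tau> ^^ N\<close> along points tending to \<^term>\<open>c\<close> from one side take
  finitely many values; a word occurring infinitely often fixes infinitely many points, so it
  is the identity, and in the limit it becomes an extremal word at \<^term>\<open>c\<close>.\<close>

lemma periodic_extremal_word_exists:
  assumes V: "finite V" "V \<noteq> {}" "V \<subseteq> ball 0 1" and \<tau>: "circle_billiard_map V \<tau>"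
    and per: "\<forall>z. cmod z = 1 \<longrightarrow> (\<tau> ^^ N) z = z"
    and c: "cmod c = 1" and s: "s \<in> {-1, 1}"
  obtains W where "length W = N" "admissible_word V W c" "extremal_word V s W c"
    "word_dilation W c = 1"
proof -
  obtain y where y: "tends_from_side s y c" "inj y" using tends_from_side_exists[OF c s] by blast
  let ?w = "\<lambda>n. itinerary V \<tau> N (y n)"
  have props: "admissible_word V (?w n) (y n) \<and> word_map (?w n) (y n) = y n \<and> length (?w n) = N" for n
    using itinerary_props[OF V \<tau>] per y(1) by (simp add: tends_from_side_def)
  have "range ?w \<subseteq> {W. set W \<subseteq> V \<and> length W = N}" using props admissible_word_set by blast
  hence "finite (range ?w)" using finite_lists_length_eq[OF V(1)] by (rule finite_subset)
  then obtain r :: "nat \<Rightarrow> nat" and W where r: "strict_mono r" and W: "\<And>n. ?w (r n) = W"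
    using finite_range_imp_constant_subseq by blast
  have z: "tends_from_side s (y \<circ> r) c" "inj (y \<circ> r)"
    using tends_from_side_subseq[OF y(1) r] inj_compose[OF y(2) strict_mono_imp_inj_on[OF r]] by auto
  have adm: "admissible_word V W c \<and> extremal_word V s W c"
    using admissible_word_limit[OF V(3) z(1)] props W by (metis comp_apply)
  have WV: "set W \<subseteq> ball 0 1" using admissible_word_set adm V(3) by blast
  have z1: "cmod ((y \<circ> r) n) = 1" and fixed: "word_map W ((y \<circ> r) n) = (y \<circ> r) n" for n
    using z(1) props[of "r n"] W[of n] by (auto simp: tends_from_side_def)
  have "(y \<circ> r) i \<noteq> (y \<circ> r) j" if "i \<noteq> j" for i j using z(2) that unfolding inj_def by blast
  hence "\<forall>z. cmod z = 1 \<longrightarrow> word_map W z = z"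
    using word_map_eq_id[OF WV z1 z1 z1 _ _ _ fixed fixed fixed, of 0 1 2] by simp
  thus ?thesis
    using that adm word_dilation_eq_1[OF WV _ c] props[of "r 0"] W[of 0] by auto
qed

lemma hyp_convex_polygon_edge_point:
  assumes "hyp_convex_polygon V"
  obtains c a b t where "cmod c = 1" "support_vertex V a c" "support_vertex V b c"
    "t > 1" "b - c = of_real t * (a - c)"
proof -
  have V: "finite V" "V \<subseteq> ball 0 1"
    using assms by (auto simp: hyp_convex_polygon_def hyp_plane_def)
  have "\<not> (V = {} \<or> (\<exists>a. V = {a}))" using assms by (auto simp: hyp_convex_polygon_def)
  then obtain a0 b0 where "a0 \<in> V" "b0 \<in> V" "a0 \<noteq> b0" by blast
  then obtain a b where "a \<in> V" "b \<in> V" "a \<noteq> b" "\<forall>p\<in>V. cross (b - a) (p - a) \<ge> 0"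
    using support_edge_exists[OF V(1)] by blast
  thus ?thesis using support_vertices_on_edge_line[OF V(2)] that by blast
qed

theorem mainTheorem17:
  fixes V :: "complex set" and \<tau> :: "complex \<Rightarrow> complex"
  assumes "hyp_convex_polygon V"
    and "boundary_extension V \<tau>"
  shows "\<not> (\<exists>N::nat. N \<ge> 1 \<and> (\<forall>\<xi>\<in>circle_at_infinity. (\<tau> ^^ N) \<xi> = \<xi>))"
proof
  assume "\<exists>N::nat. N \<ge> 1 \<and> (\<forall>\<xi>\<in>circle_at_infinity. (\<tau> ^^ N) \<xi> = \<xi>)"
  then obtain N :: nat where N: "N \<ge> 1" and per: "\<forall>z. cmod z = 1 \<longrightarrow> (\<tau> ^^ N) z = z"
    by (auto simp: circle_at_infinity_def)
  obtain c a b t where c: "cmod c = 1" "support_vertex V a c" "support_vertex V b c"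
    "t > 1" "b - c = of_real t * (a - c)"
    using hyp_convex_polygon_edge_point[OF assms(1)] .
  have V: "finite V" "V \<subseteq> ball 0 1"
    using assms(1) by (auto simp: hyp_convex_polygon_def hyp_plane_def)
  have "V \<noteq> {}" using c(2) by (auto simp: support_vertex_def)
  have \<tau>: "circle_billiard_map V \<tau>" using circle_billiard_map_boundary_extension[OF assms] .
  obtain W1 where W1: "length W1 = N" "admissible_word V W1 c" "extremal_word V 1 W1 c"
    "word_dilation W1 c = 1"
    using periodic_extremal_word_exists[OF V(1) \<open>V \<noteq> {}\<close> V(2) \<tau> per c(1), of 1] by auto
  obtain W2 where W2: "length W2 = N" "admissible_word V W2 c" "extremal_word V (-1) W2 c"
    "word_dilation W2 c = 1"
    using periodic_extremal_word_exists[OF V(1) \<open>V \<noteq> {}\<close> V(2) \<tau> per c(1), of "-1"] by auto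
  have "W1 \<noteq> []" using W1(1) N by auto
  hence "word_dilation W2 c < word_dilation W1 c"
    using extremal_words_dilation_less[OF V(2) c W1(2,3) W2(2,3)] W1(1) W2(1) by simp
  thus False using W1(4) W2(4) by simp
qed

end
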